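(* Consider the binary instrumental variable model described in the context, with both treatment and outcome possibly missing: $R^D\in\{0,1\}$ indicates that $D$ is observed and $R^Y\in\{0,1\}$ that $Y$ is observed, so the observed data are $(Z,R^D,R^D D,R^Y,R^Y Y)$. Assume the IV assumptions and that $R^D\perp\!\!\!\perp (Z,Y)\mid (U,D)$. Then: (1ZD$\oplus$2UD) If $R^Y\perp\!\!\!\perp (U,Y)\mid (Z,D,R^D)$, $\mathbb{P}(R^D=1\mid U=c,D=d)>0$ for $d=0,1$, and $\mathbb{P}(R^Y=1\mid Z=z,D=d,R^D=1)>0$ for all $z$ and $d$, then the CACE is identifiable. (1UD$\oplus$2UD) If $R^Y\perp\!\!\!\perp (Z,Y)\mid (U,D,R^D)$, and $\mathbb{P}(R^D=1\mid U=c,D=d)>0$ and $\mathbb{P}(R^Y=1\mid U=c,D=d,R^D=1)>0$ for $d=0,1$, then the CACE is identifiable. (1DY$\oplus$2UD) If $R^Y\perp\!\!\!\perp (Z,U)\mid (D,Y,R^D)$, $Y$ is binary, noncompliance is two-sided, $\mathbb{P}(R^D=1\mid U=c,D=d)>0$ for $d=0,1$, $\mathbb{P}(R^Y=1\mid D=d,Y=y,R^D=1)>0$ for all $d$ and $y$, and $Y\not\!\perp\!\!\!\perp Z\mid (D=d,R^D=1)$ for $d=0,1$, then the CACE is identifiable. (1ZY$\oplus$2UD) If $R^Y\perp\!\!\!\perp (U,D)\mid (Z,Y,R^D)$, $Y$ is binary, noncompliance is two-sided, $\mathbb{P}(R^D=1\mid U=c,D=d)>0$ for $d=0,1$, $\mathbb{P}(R^Y=1\mid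 Z=z,Y=y,R^D=1)>0$ for all $z$ and $y$, and $Y\not\!\perp\!\!\!\perp D\mid (Z=z,R^D=1)$ for $z=0,1$, then the CACE is identifiable. (1UY$\oplus$2UD) If $R^Y\perp\!\!\!\perp (Z,D)\mid (U,Y,R^D)$, $Y$ is binary, $\mathbb{P}(R^D=1\mid U=c,D=d)>0$ for $d=0,1$, and $\mathbb{P}(R^Y=1\mid U=c,Y=y,R^D=1)>0$ for $y=0,1$, then the CACE is identifiable.
   Context: $Z\in\{0,1\}$ is a binary instrument, $D\in\{0,1\}$ the treatment received, $Y$ the outcome (real-valued; "binary $Y$" means $Y\in\{0,1\}$). Potential values $D(z),Y(z)$ for $z=0,1$ are defined with respect to the instrument; observed values are $D=ZD(1)+(1-Z)D(0)$ and $Y=ZY(1)+(1-Z)Y(0)$. The latent compliance status $U$ is $a$ (always-taker) if $D(1)=D(0)=1$, $c$ (complier) if $D(1)=1,D(0)=0$, $d$ (defier) if $D(1)=0,D(0)=1$, $n$ (never-taker) if $D(1)=D(0)=0$. IV assumptions: (1) $Z\perp\!\!\!\perp\{D(1),D(0),Y(1),Y(0)\}$; (2) $D(1)\ge D(0)$ for all units (no defiers); (3) $\mathbb{E}\{D(1)-D(0)\}\neq0$; (4) $Y(1)=Y(0)$ for units with $U\in\{a,n\}$. The complier average causal effect is $\mathrm{CACE}=\mathbb{E}\{Y(1)-Y(0)\mid U=c\}$. One-sided noncompliance means $D(0)=0$ for all units (only compliers and never-takers); two-sided noncompliance is the general case in which units in both arms may fail to comply (always-takers and never-takers may both be present). Independence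 statements refer to the joint distribution of $(Z,U,D,Y,R^D,R^Y)$. The CACE is identifiable if it is uniquely determined by the distribution of the observed data among all joint distributions satisfying the stated assumptions. *)

theory Defs
  imports "HOL-Probability.Probability"
begin

datatype comp = Always | Complier | Defier | Never

text \<open>A unit of the full data: (Z, D(0), D(1), Y(0), Y(1), R^D, R^Y).
  Booleans encode the values 0/1 (True = 1).\<close>
type_synonym unit_data = "bool \<times> bool \<times> bool \<times> real \<times> real \<times> bool \<times> bool"

definition full_space :: "unit_data measure" where
  "full_space = count_space UNIV \<Otimes>\<^sub>M count_space UNIV \<Otimes>\<^sub>M count_space UNIV \<Otimes>\<^sub>M
                borel \<Otimes>\<^sub>M borel \<Otimes>\<^sub>M count_space UNIV \<Otimes>\<^sub>M count_space UNIV"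

definition Zv :: "unit_data \<Rightarrow> bool" where "Zv w = fst w"
definition D0v :: "unit_data \<Rightarrow> bool" where "D0v w = fst (snd w)"
definition D1v :: "unit_data \<Rightarrow> bool" where "D1v w = fst (snd (snd w))"
definition Y0v :: "unit_data \<Rightarrow> real" where "Y0v w = fst (snd (snd (snd w)))"
definition Y1v :: "unit_data \<Rightarrow> real" where "Y1v w = fst (snd (snd (snd (snd w))))"
definition RDv :: "unit_data \<Rightarrow> bool" where "RDv w = fst (snd (snd (snd (snd (snd w)))))"
definition RYv :: "unit_data \<Rightarrow> bool" where "RYv w = snd (snd (snd (snd (snd (snd w)))))"

definition Dv :: "unit_data \<Rightarrow> bool" where "Dv w = (if Zv w then D1v w else D0v w)"
definition Yv :: "unit_data \<Rightarrow> real" where "Yv w = (if Zv w then Y1v w else Y0v w)"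

definition Uv :: "unit_data \<Rightarrow> comp" where
  "Uv w = (if D1v w \<and> D0v w then Always
           else if D1v w \<and> \<not> D0v w then Complier
           else if \<not> D1v w \<and> D0v w then Defier else Never)"

definition obs :: "unit_data \<Rightarrow> bool \<times> bool \<times> bool \<times> bool \<times> real" where
  "obs w = (Zv w, RDv w, RDv w \<and> Dv w, RYv w, if RYv w then Yv w else 0)"

definition obs_space :: "(bool \<times> bool \<times> bool \<times> bool \<times> real) measure" where
  "obs_space = count_space UNIV \<Otimes>\<^sub>M count_space UNIV \<Otimes>\<^sub>M count_space UNIV \<Otimes>\<^sub>M
               count_space UNIV \<Otimes>\<^sub>M borel"

definition obs_law :: "unit_data measure \<Rightarrow> (bool \<times> bool \<times> bool \<times> bool \<times> real) measure" where
  "obs_law P = distr P obs_space obs"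

definition cprob :: "'o measure \<Rightarrow> ('o \<Rightarrow> bool) \<Rightarrow> ('o \<Rightarrow> bool) \<Rightarrow> real" where
  "cprob P A B = measure P {w \<in> space P. A w \<and> B w} / measure P {w \<in> space P. B w}"

definition indep_given ::
  "'o measure \<Rightarrow> ('o \<Rightarrow> 'x) \<Rightarrow> 'x measure \<Rightarrow> ('o \<Rightarrow> 'y) \<Rightarrow> 'y measure \<Rightarrow> ('o \<Rightarrow> bool) \<Rightarrow> bool" where
  "indep_given P X MX Y MY E \<longleftrightarrow>
     (\<forall>A \<in> sets MX. \<forall>B \<in> sets MY.
        measure P {w \<in> space P. X w \<in> A \<and> Y w \<in> B \<and> E w} * measure P {w \<in> space P. E w}
        = measure P {w \<in> space P. X w \<in> A \<and> E w} * measure P {w \<in> space P. Y w \<in> B \<and> E w})"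

text \<open>Conditional independence of X and Y given a discretely distributed W
  (all conditioning variables in the theorem take finitely many values a.s.).\<close>
definition cond_indep ::
  "'o measure \<Rightarrow> ('o \<Rightarrow> 'x) \<Rightarrow> 'x measure \<Rightarrow> ('o \<Rightarrow> 'y) \<Rightarrow> 'y measure \<Rightarrow> ('o \<Rightarrow> 'w) \<Rightarrow> bool" where
  "cond_indep P X MX Y MY W \<longleftrightarrow> (\<forall>v. indep_given P X MX Y MY (\<lambda>w. W w = v))"

definition cace :: "unit_data measure \<Rightarrow> real" where
  "cace P = (\<integral>w. indicator {w. Uv w = Complier} w * (Y1v w - Y0v w) \<partial>P)
            / measure P {w \<in> space P. Uv w = Complier}"

definition base_model :: "unit_data measure \<Rightarrow> bool" where
  "base_model P \<longleftrightarrow>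
     prob_space P \<and> sets P = sets full_space \<and>
     0 < measure P {w \<in> space P. Zv w} \<and> measure P {w \<in> space P. Zv w} < 1 \<and>
     indep_given P Zv (count_space UNIV) (\<lambda>w. (D1v w, D0v w, Y1v w, Y0v w))
        (count_space UNIV \<Otimes>\<^sub>M count_space UNIV \<Otimes>\<^sub>M borel \<Otimes>\<^sub>M borel)
        (\<lambda>w. True) \<and>
     (AE w in P. D0v w \<longrightarrow> D1v w) \<and>
     (\<integral>w. of_bool (D1v w) - of_bool (D0v w) \<partial>P) \<noteq> (0::real) \<and>
     (AE w in P. Uv w \<in> {Always, Never} \<longrightarrow> Y1v w = Y0v w) \<and>
     integrable P Y0v \<and> integrable P Y1v \<and>
     cond_indep P RDv (count_space UNIV) (\<lambda>w. (Zv w, Yv w)) (count_space UNIV \<Otimes>\<^sub>M borel)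
        (\<lambda>w. (Uv w, Dv w)) \<and>
     (\<forall>d. cprob P RDv (\<lambda>w. Uv w = Complier \<and> Dv w = d) > 0)"

definition binary_Y :: "unit_data measure \<Rightarrow> bool" where
  "binary_Y P \<longleftrightarrow> (AE w in P. Yv w \<in> {0, 1})"

definition two_sided :: "unit_data measure \<Rightarrow> bool" where
  "two_sided P \<longleftrightarrow> measure P {w \<in> space P. Uv w = Always} > 0 \<and>
                    measure P {w \<in> space P. Uv w = Never} > 0"

definition cace_identifiable :: "(unit_data measure \<Rightarrow> bool) \<Rightarrow> bool" where
  "cace_identifiable Q \<longleftrightarrow>
     (\<forall>P P'. Q P \<and> Q P' \<and> obs_law P = obs_law P' \<longrightarrow> cace P = cace P')"

end

theory Submission
  imports Defs
begin

text \<open>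
  An observed cell \<open>(Z = z, R\<^sup>D = 1, D = d)\<close> contains two compliance strata: the
  always-takers (\<open>d = 1\<close>) or never-takers (\<open>d = 0\<close>), and the compliers if \<open>z = d\<close>, otherwise
  the defiers, who have probability zero.  As \<open>Z\<close> is independent of the strata and the potential
  outcomes and \<open>R\<^sup>D\<close> depends on \<open>(U, D)\<close> only, stratum \<open>u\<close> enters the cell with weight
  \<open>P(Z = z) P(R\<^sup>D = 1 | U = u, D = d) P(U = u, Y(z) \<in> \<cdot>)\<close>.  After dividing by \<open>P(Z = z)\<close>,
  always- and never-takers contribute equally to both cells of an arm (exclusion restriction), so
  the difference of the two cells isolates the compliers, and in arm \<open>d\<close> the ratio of the outcome
  contrast to the mass contrast is \<open>E(Y(d) | U = c)\<close>.  A further response factor depending on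
  \<open>(U, D)\<close> only cancels in that ratio (1UD); one depending on \<open>(Z, D)\<close> is removed by inverse
  weighting within the cell (1ZD).

  For binary \<open>Y\<close> the response may depend on \<open>Y\<close>.  If it depends on \<open>(D, Y)\<close> or \<open>(Z, Y)\<close>, the
  other variable \<open>x\<close> is a shadow variable: within an arm the responding counts \<open>\<beta>(y) N(x, y)\<close>
  and the margins \<open>N(x, 0) + N(x, 1)\<close> determine \<open>N\<close> once \<open>det N \<noteq> 0\<close>, which is exactly the
  assumed dependence of \<open>Y\<close> on \<open>x\<close>.  If it depends on
  \<open>(U, Y)\<close>, the complier contrasts give \<open>\<beta>(y) P(Y(d) = y | U = c)\<close> for \<open>d, y \<in> {0, 1}\<close>, four
  equations that determine \<open>P(Y(1) = 1 | U = c) - P(Y(0) = 1 | U = c)\<close> in closed form.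
\<close>

section \<open>Conditional probabilities\<close>

lemma (in prob_space) indep_given_response_factor:
  assumes indep: "indep_given M R (count_space UNIV) W MW E"
    and S: "S \<in> sets MW" and E: "{w \<in> space M. E w} \<in> events"
  shows "prob {w \<in> space M. R w \<and> W w \<in> S \<and> E w}
       = cprob M R E * prob {w \<in> space M. W w \<in> S \<and> E w}"
proof -
  have "prob {w \<in> space M. R w \<and> W w \<in> S \<and> E w} * prob {w \<in> space M. E w}
      = prob {w \<in> space M. R w \<and> E w} * prob {w \<in> space M. W w \<in> S \<and> E w}"
    using indep S unfolding indep_given_def by (drule_tac bspec[of _ _ "{True}"]) auto
  moreover have "prob {w \<in> space M. R w \<and> W w \<in> S \<and> E w} \<le> prob {w \<in> space M. E w}"
    by (rule finite_measure_mono[OF _ E]) auto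
  ultimately show ?thesis
    using measure_nonneg[of M "{w \<in> space M. R w \<and> W w \<in> S \<and> E w}"]
    unfolding cprob_def by (cases "prob {w \<in> space M. E w} = 0") (auto simp: field_simps)
qed

lemma (in prob_space) integral_indicator_eq_if_measure_eq:
  fixes V W :: "'a \<Rightarrow> real"
  assumes A: "A \<in> events" and G: "G \<in> events"
    and V[measurable]: "V \<in> borel_measurable M" and W[measurable]: "W \<in> borel_measurable M"
    and c: "c \<ge> 0"
    and law: "\<And>B. B \<in> sets borel \<Longrightarrow> prob (A \<inter> V -` B) = c * prob (G \<inter> W -` B)"
  shows "(\<integral>w. indicator A w * V w \<partial>M) = c * (\<integral>w. indicator G w * W w \<partial>M)"
proof -
  define MA where "MA = distr (density M (\<lambda>w. ennreal (indicator A w))) borel V"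
  define MG where "MG = distr (density M (\<lambda>w. ennreal (c * indicator G w))) borel W"
  have "MA = MG"
  proof (rule measure_eqI)
    fix B assume "B \<in> sets MA"
    then have B[measurable]: "B \<in> sets borel" by (simp add: MA_def)
    have "A \<inter> V -` B = A \<inter> (V -` B \<inter> space M)" "G \<inter> W -` B = G \<inter> (W -` B \<inter> space M)"
      using sets.sets_into_space[OF A] sets.sets_into_space[OF G] by blast+
    then have AB: "A \<inter> V -` B \<in> events" and GB: "G \<inter> W -` B \<in> events"
      using A G by (simp_all add: sets.Int measurable_sets)
    have "emeasure MA B = (\<integral>\<^sup>+ w. indicator (A \<inter> V -` B) w \<partial>M)"
      unfolding MA_def using A
      by (simp add: emeasure_distr emeasure_density) (auto intro!: nn_integral_cong split: split_indicator)
    also have "\<dots> = ennreal (c * prob (G \<inter> W -` B))"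
      using AB by (simp add: emeasure_eq_measure law[OF B])
    also have "\<dots> = ennreal c * (\<integral>\<^sup>+ w. indicator (G \<inter> W -` B) w \<partial>M)"
      using GB c by (simp add: emeasure_eq_measure ennreal_mult)
    also have "\<dots> = emeasure MG B"
      unfolding MG_def using G c
      by (simp add: emeasure_distr emeasure_density nn_integral_cmult[symmetric] ennreal_mult)
         (auto intro!: nn_integral_cong split: split_indicator)
    finally show "emeasure MA B = emeasure MG B" .
  qed (simp add: MA_def MG_def)
  have "(\<integral>y. y \<partial>MA) = (\<integral>w. indicator A w * V w \<partial>M)"
    unfolding MA_def using A by (simp add: integral_distr integral_density)
  moreover have "(\<integral>y. y \<partial>MG) = c * (\<integral>w. indicator G w * W w \<partial>M)"
    unfolding MG_def using G c by (simp add: integral_distr integral_density mult.assoc)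
  ultimately show ?thesis using \<open>MA = MG\<close> by simp
qed

lemma cprob_nonneg: "cprob M A B \<ge> 0"
  by (simp add: cprob_def)

lemma measure_pos_if_cprob_pos: "cprob M A B > 0 \<Longrightarrow> measure M {w \<in> space M. B w} > 0"
  unfolding cprob_def by (metis divide_eq_0_iff less_eq_real_def measure_nonneg not_less)

section \<open>Identification algebra\<close>

definition instrument_contrast :: "(bool \<Rightarrow> bool \<Rightarrow> real) \<Rightarrow> (bool \<Rightarrow> real) \<Rightarrow> bool \<Rightarrow> real" where
  "instrument_contrast M p d = M d d / p d - M (\<not> d) d / p (\<not> d)"

definition wald_contrast :: "(bool \<Rightarrow> bool \<Rightarrow> real) \<Rightarrow> (bool \<Rightarrow> bool \<Rightarrow> real) \<Rightarrow> (bool \<Rightarrow> real) \<Rightarrow> real" where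
  "wald_contrast I M p = instrument_contrast I p True / instrument_contrast M p True
                       - instrument_contrast I p False / instrument_contrast M p False"

definition shadow_mass :: "(bool \<Rightarrow> real \<Rightarrow> real) \<Rightarrow> (bool \<Rightarrow> real) \<Rightarrow> bool \<Rightarrow> real" where
  "shadow_mass Q M x = Q x 1 * (Q False 0 * M True - Q True 0 * M False)
                       / (Q False 0 * Q True 1 - Q False 1 * Q True 0)"

lemma shadow_mass_eq:
  fixes N :: "bool \<Rightarrow> real \<Rightarrow> real"
  assumes Q: "\<And>x y. Q x y = \<beta> y * N x y" and M: "\<And>x. M x = N x 0 + N x 1"
    and "\<beta> 0 > 0" "\<beta> 1 > 0" and det: "N False 0 * N True 1 \<noteq> N False 1 * N True 0"
  shows "shadow_mass Q M x = N x 1"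
proof -
  have "Q False 0 * M True - Q True 0 * M False = \<beta> 0 * (N False 0 * N True 1 - N False 1 * N True 0)"
    and "Q False 0 * Q True 1 - Q False 1 * Q True 0 = \<beta> 0 * \<beta> 1 * (N False 0 * N True 1 - N False 1 * N True 0)"
    by (simp_all add: Q M algebra_simps)
  then show ?thesis
    using assms(3,4) det by (simp add: shadow_mass_def Q)
qed

definition binary_contrast :: "real \<Rightarrow> real \<Rightarrow> real \<Rightarrow> real \<Rightarrow> real" where
  "binary_contrast a0 a1 c0 c1 = (a1 - c1) * (c0 - a0) / (a1 * c0 - a0 * c1)"

text \<open>If \<open>p = q\<close>, numerator and denominator both vanish and division by zero gives the right value.\<close>
lemma binary_contrast_eq:
  fixes b0 b1 p q :: real
  assumes "b0 > 0" "b1 > 0"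
  shows "binary_contrast (b0 * (1 - p)) (b1 * p) (b0 * (1 - q)) (b1 * q) = p - q"
proof -
  have "binary_contrast (b0 * (1 - p)) (b1 * p) (b0 * (1 - q)) (b1 * q)
      = (b0 * b1 * (p - q)) * (p - q) / (b0 * b1 * (p - q))"
    unfolding binary_contrast_def by (simp add: algebra_simps)
  then show ?thesis
    using assms by (cases "p = q") simp_all
qed

section \<open>The full-data model\<close>

lemma space_full_space [simp]: "space full_space = UNIV"
  by (simp add: full_space_def space_pair_measure)

lemma measurable_unit_data [measurable]:
  "Zv \<in> measurable full_space (count_space UNIV)"
  "D0v \<in> measurable full_space (count_space UNIV)"
  "D1v \<in> measurable full_space (count_space UNIV)"
  "RDv \<in> measurable full_space (count_space UNIV)"
  "RYv \<in> measurable full_space (count_space UNIV)"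
  "Y0v \<in> borel_measurable full_space"
  "Y1v \<in> borel_measurable full_space"
  unfolding full_space_def Zv_def D0v_def D1v_def RDv_def RYv_def Y0v_def Y1v_def
  by measurable

lemma measurable_Dv_Yv_Uv [measurable]:
  "Dv \<in> measurable full_space (count_space UNIV)"
  "Yv \<in> borel_measurable full_space"
  "Uv \<in> measurable full_space (count_space UNIV)"
  unfolding Dv_def Yv_def Uv_def by measurable

lemma pred_unit_data [measurable]:
  "Measurable.pred full_space Zv" "Measurable.pred full_space RDv"
  "Measurable.pred full_space RYv" "Measurable.pred full_space Dv"
  by (auto simp: pred_def simp del: space_full_space)

definition Ypot :: "bool \<Rightarrow> unit_data \<Rightarrow> real" where
  "Ypot z w = (if z then Y1v w else Y0v w)"

lemma Ypot_simps [simp]: "Ypot True = Y1v" "Ypot False = Y0v"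
  by (simp_all add: fun_eq_iff Ypot_def)

lemma measurable_Ypot [measurable]: "Ypot z \<in> borel_measurable full_space"
  unfolding Ypot_def by measurable

lemma Yv_eq_Ypot: "Yv w = Ypot (Zv w) w"
  by (simp add: Yv_def Ypot_def)

fun treatment_of :: "comp \<Rightarrow> bool \<Rightarrow> bool" where
  "treatment_of Always z = True"
| "treatment_of Never z = False"
| "treatment_of Complier z = z"
| "treatment_of Defier z = (\<not> z)"

lemma Dv_eq_treatment_of: "Dv w = treatment_of (Uv w) (Zv w)"
  by (cases "Uv w") (auto simp: Uv_def Dv_def split: if_splits)

definition compliance_type :: "bool \<Rightarrow> bool \<Rightarrow> comp" where
  "compliance_type d1 d0 = (if d1 \<and> d0 then Always else if d1 \<and> \<not> d0 then Complier
                            else if \<not> d1 \<and> d0 then Defier else Never)"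

lemma Uv_eq_compliance_type: "Uv w = compliance_type (D1v w) (D0v w)"
  by (simp add: Uv_def compliance_type_def)

definition pZ :: "unit_data measure \<Rightarrow> bool \<Rightarrow> real" where
  "pZ P z = measure P {w. Zv w = z}"

definition rd_rate :: "unit_data measure \<Rightarrow> comp \<Rightarrow> bool \<Rightarrow> real" where
  "rd_rate P u d = cprob P RDv (\<lambda>w. Uv w = u \<and> Dv w = d)"

definition stratum_prob :: "unit_data measure \<Rightarrow> comp \<Rightarrow> real" where
  "stratum_prob P u = measure P {w. Uv w = u}"

definition stratum_outcome :: "unit_data measure \<Rightarrow> comp \<Rightarrow> bool \<Rightarrow> real" where
  "stratum_outcome P u z = (\<integral>w. indicator {w. Uv w = u} w * Ypot z w \<partial>P)"

definition stratum_moment ::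
  "unit_data measure \<Rightarrow> (unit_data \<Rightarrow> bool) \<Rightarrow> (unit_data \<Rightarrow> real) \<Rightarrow> bool \<Rightarrow> comp \<Rightarrow> real" where
  "stratum_moment P R V z u = (\<integral>w. indicator {w. Zv w = z \<and> RDv w \<and> Uv w = u \<and> R w} w * V w \<partial>P)"

definition cell_moment ::
  "unit_data measure \<Rightarrow> (unit_data \<Rightarrow> bool) \<Rightarrow> (unit_data \<Rightarrow> real) \<Rightarrow> bool \<Rightarrow> bool \<Rightarrow> real" where
  "cell_moment P R V z d = (\<integral>w. indicator {w. Zv w = z \<and> RDv w \<and> Dv w = d \<and> R w} w * V w \<partial>P)"

locale iv_model =
  fixes P :: "unit_data measure"
  assumes base_model: "base_model P"
begin

sublocale prob_space P
  using base_model by (simp add: base_model_def)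

lemma sets_P [measurable_cong]: "sets P = sets full_space"
  using base_model by (simp add: base_model_def)

lemma space_P [simp]: "space P = UNIV"
  using sets_eq_imp_space_eq[OF sets_P] by simp

lemma events_pred: "Measurable.pred full_space \<Phi> \<Longrightarrow> {w. \<Phi> w} \<in> events"
  using measurable_cong_sets[OF sets_P refl] by (simp add: pred_def)

lemma integrable_Y [simp]: "integrable P Y0v" "integrable P Y1v" "integrable P (Ypot z)" "integrable P Yv"
proof -
  show Y0: "integrable P Y0v" and Y1: "integrable P Y1v"
    using base_model by (simp_all add: base_model_def)
  then show "integrable P (Ypot z)"
    by (cases z) simp_all
  show "integrable P Yv"
    by (rule Bochner_Integration.integrable_bound[where f = "\<lambda>w. \<bar>Y0v w\<bar> + \<bar>Y1v w\<bar>"])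
       (use Y0 Y1 in \<open>auto simp: Yv_def\<close>)
qed

lemma pZ_pos: "pZ P z > 0"
proof -
  have Z: "0 < prob {w. Zv w}" "prob {w. Zv w} < 1"
    using base_model by (simp_all add: base_model_def)
  have "space P - {w. Zv w} = {w. \<not> Zv w}"
    by auto
  then have "prob {w. \<not> Zv w} = 1 - prob {w. Zv w}"
    using prob_compl[OF events_pred, of Zv] by simp
  then show ?thesis
    using Z by (cases z) (simp_all add: pZ_def)
qed

lemma rd_rate_nonneg: "rd_rate P u d \<ge> 0"
  by (simp add: rd_rate_def cprob_def)

lemma rd_rate_complier_pos: "rd_rate P Complier d > 0"
  using base_model by (simp add: base_model_def rd_rate_def)

lemma stratum_prob_complier_pos: "stratum_prob P Complier > 0"
proof -
  have "prob {w. Uv w = Complier \<and> Dv w = True} \<noteq> 0"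
    using rd_rate_complier_pos[of True] by (auto simp: rd_rate_def cprob_def)
  then have "0 < prob {w. Uv w = Complier \<and> Dv w = True}"
    by (simp add: zero_less_measure_iff)
  also have "\<dots> \<le> stratum_prob P Complier"
    unfolding stratum_prob_def by (rule finite_measure_mono) (auto intro!: events_pred)
  finally show ?thesis .
qed

lemma defier_events: "{w. Uv w = Defier} \<in> events"
  by (rule events_pred) measurable

lemma defier_null: "prob {w. Uv w = Defier} = 0"
proof -
  have "AE w in P. D0v w \<longrightarrow> D1v w"
    using base_model by (simp add: base_model_def)
  then have "AE w in P. w \<notin> {w. Uv w = Defier}"
    by eventually_elim (auto simp: Uv_def)
  then show ?thesis
    by (simp add: AE_iff_measurable[OF defier_events] emeasure_eq_measure)
qed

lemma stratum_moment_defier [simp]: "stratum_moment P R V z Defier = 0"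
proof -
  have "AE w in P. w \<notin> {w. Uv w = Defier}"
    using defier_null by (simp add: AE_iff_measurable[OF defier_events] emeasure_eq_measure)
  then have "AE w in P. indicator {w. Zv w = z \<and> RDv w \<and> Uv w = Defier \<and> R w} w * V w = 0"
    by eventually_elim (auto simp: indicator_def)
  then show ?thesis
    unfolding stratum_moment_def by (rule integral_eq_zero_AE)
qed

lemma prob_Z_stratum:
  assumes [measurable]: "B \<in> sets borel"
  shows "prob {w. Zv w = z \<and> Uv w \<in> C \<and> Ypot z w \<in> B} = pZ P z * prob {w. Uv w \<in> C \<and> Ypot z w \<in> B}"
proof -
  let ?M = "count_space UNIV \<Otimes>\<^sub>M count_space UNIV \<Otimes>\<^sub>M borel \<Otimes>\<^sub>M (borel :: real measure)"
  define S where "S = {x \<in> space ?M. compliance_type (fst x) (fst (snd x)) \<in> C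
                     \<and> (if z then fst (snd (snd x)) else snd (snd (snd x))) \<in> B}"
  have S: "S \<in> sets ?M"
    unfolding S_def compliance_type_def by measurable
  have S_iff: "(D1v w, D0v w, Y1v w, Y0v w) \<in> S \<longleftrightarrow> Uv w \<in> C \<and> Ypot z w \<in> B" for w
    by (simp add: S_def space_pair_measure Uv_eq_compliance_type Ypot_def)
  have "indep_given P Zv (count_space UNIV) (\<lambda>w. (D1v w, D0v w, Y1v w, Y0v w)) ?M (\<lambda>w. True)"
    using base_model by (simp add: base_model_def)
  then have "prob {w. Zv w \<in> {z} \<and> (D1v w, D0v w, Y1v w, Y0v w) \<in> S} * prob UNIV
      = prob {w. Zv w \<in> {z}} * prob {w. (D1v w, D0v w, Y1v w, Y0v w) \<in> S}"
    using S unfolding indep_given_def by (drule_tac bspec[of _ _ "{z}"]) auto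
  then show ?thesis
    using prob_space by (simp add: S_iff pZ_def)
qed

lemma cond_indep_response_factor:
  assumes "cond_indep P R (count_space UNIV) W MW V" and "S \<in> sets MW" and "{w. V w = v} \<in> events"
  shows "prob {w. R w \<and> W w \<in> S \<and> V w = v} = cprob P R (\<lambda>w. V w = v) * prob {w. W w \<in> S \<and> V w = v}"
  using assms indep_given_response_factor[of R W MW "\<lambda>w. V w = v" S]
  unfolding cond_indep_def by simp

lemma prob_resp_D_stratum:
  assumes [measurable]: "B \<in> sets borel"
  shows "prob {w. Zv w = z \<and> RDv w \<and> Uv w = u \<and> Yv w \<in> B}
       = pZ P z * rd_rate P u (treatment_of u z) * prob {w. Uv w = u \<and> Ypot z w \<in> B}"
proof -
  let ?t = "treatment_of u z"
  have ci: "cond_indep P RDv (count_space UNIV) (\<lambda>w. (Zv w, Yv w)) (count_space UNIV \<Otimes>\<^sub>M borel)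
        (\<lambda>w. (Uv w, Dv w))"
    using base_model by (simp add: base_model_def)
  have "{w. (Uv w, Dv w) = (u, ?t)} \<in> events"
    by (intro events_pred) (simp only: prod.inject, measurable)
  from cond_indep_response_factor[OF ci _ this, of "{z} \<times> B"]
  have "prob {w. RDv w \<and> Zv w = z \<and> Yv w \<in> B \<and> Uv w = u \<and> Dv w = ?t}
      = rd_rate P u ?t * prob {w. Zv w = z \<and> Yv w \<in> B \<and> Uv w = u \<and> Dv w = ?t}"
    unfolding rd_rate_def by simp
  moreover have "{w. RDv w \<and> Zv w = z \<and> Yv w \<in> B \<and> Uv w = u \<and> Dv w = ?t}
      = {w. Zv w = z \<and> RDv w \<and> Uv w = u \<and> Yv w \<in> B}"
    by (auto simp: Dv_eq_treatment_of)
  moreover have "{w. Zv w = z \<and> Yv w \<in> B \<and> Uv w = u \<and> Dv w = ?t}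
      = {w. Zv w = z \<and> Uv w \<in> {u} \<and> Ypot z w \<in> B}"
    by (auto simp: Dv_eq_treatment_of Yv_eq_Ypot)
  ultimately show ?thesis
    using prob_Z_stratum[of B z "{u}"] by simp
qed

lemma cell_moment_eq_strata:
  assumes [measurable]: "Measurable.pred full_space R" and V: "integrable P V"
  shows "cell_moment P R V z d = stratum_moment P R V z (if d then Always else Never)
                               + stratum_moment P R V z (if z = d then Complier else Defier)"
proof -
  let ?S = "\<lambda>u. {w. Zv w = z \<and> RDv w \<and> Uv w = u \<and> R w}"
  have "indicator {w. Zv w = z \<and> RDv w \<and> Dv w = d \<and> R w} w * V w
      = indicator (?S (if d then Always else Never)) w * V w
      + indicator (?S (if z = d then Complier else Defier)) w * V w" for w
    by (cases "Uv w"; cases d; cases z) (auto simp: Dv_eq_treatment_of indicator_def)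
  moreover have "integrable P (\<lambda>w. indicator (?S u) w * V w)" for u
    using integrable_mult_indicator[OF events_pred V, of "\<lambda>w. Zv w = z \<and> RDv w \<and> Uv w = u \<and> R w"]
    by simp
  ultimately show ?thesis
    unfolding cell_moment_def stratum_moment_def by simp
qed

lemma instrument_contrast_cell_moment:
  assumes R: "Measurable.pred full_space R" and V: "integrable P V"
    and factor: "\<And>z u. stratum_moment P R V z u = pZ P z * c u (treatment_of u z) * g u z"
    and "g Always False = g Always True" and "g Never False = g Never True"
  shows "instrument_contrast (cell_moment P R V) (pZ P) d = c Complier d * g Complier d"
  using pZ_pos[of True] pZ_pos[of False] assms
  by (cases d) (simp_all add: instrument_contrast_def cell_moment_eq_strata[OF R V] factor field_simps)

lemma stratum_outcome_exclusion:
  assumes "u \<in> {Always, Never}"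
  shows "stratum_outcome P u False = stratum_outcome P u True"
proof -
  have "AE w in P. Uv w \<in> {Always, Never} \<longrightarrow> Y1v w = Y0v w"
    using base_model by (simp add: base_model_def)
  then have "AE w in P. indicator {w. Uv w = u} w * Ypot False w = indicator {w. Uv w = u} w * Ypot True w"
    by eventually_elim (use assms in \<open>auto simp: indicator_def\<close>)
  then show ?thesis
    unfolding stratum_outcome_def by (intro integral_cong_AE) measurable
qed

lemma prob_potential_exclusion:
  assumes "u \<in> {Always, Never}"
  shows "prob {w. Uv w = u \<and> Ypot False w = y} = prob {w. Uv w = u \<and> Ypot True w = y}"
proof -
  have "AE w in P. Uv w \<in> {Always, Never} \<longrightarrow> Y1v w = Y0v w"
    using base_model by (simp add: base_model_def)
  then have "AE w in P. w \<in> {w. Uv w = u \<and> Ypot False w = y} \<longleftrightarrow> w \<in> {w. Uv w = u \<and> Ypot True w = y}"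
    by eventually_elim (use assms in auto)
  then show ?thesis
    by (rule measure_eq_AE) (intro events_pred; measurable)+
qed

lemma cace_eq_stratum_outcome:
  "cace P = (stratum_outcome P Complier True - stratum_outcome P Complier False) / stratum_prob P Complier"
proof -
  have "integrable P (\<lambda>w. indicator {w. Uv w = Complier} w * Ypot z w)" for z
    using integrable_mult_indicator[OF events_pred integrable_Y(3)] by simp
  from this[of True] this[of False] show ?thesis
    unfolding cace_def stratum_outcome_def stratum_prob_def
    by (simp add: right_diff_distrib)
qed

lemma stratum_moments_if_law:
  assumes [measurable]: "Measurable.pred full_space R" and k: "k \<ge> 0"
    and law: "\<And>B. B \<in> sets borel \<Longrightarrow>
       prob {w. Zv w = z \<and> RDv w \<and> Uv w = u \<and> R w \<and> Yv w \<in> B} = k * prob {w. Uv w = u \<and> Ypot z w \<in> B}"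
  shows "stratum_moment P R Yv z u = k * stratum_outcome P u z"
    and "stratum_moment P R (\<lambda>_. 1) z u = k * stratum_prob P u"
proof -
  show "stratum_moment P R Yv z u = k * stratum_outcome P u z"
    unfolding stratum_moment_def stratum_outcome_def
  proof (rule integral_indicator_eq_if_measure_eq)
    fix B :: "real set" assume "B \<in> sets borel"
    moreover have "{w. Zv w = z \<and> RDv w \<and> Uv w = u \<and> R w} \<inter> Yv -` B
        = {w. Zv w = z \<and> RDv w \<and> Uv w = u \<and> R w \<and> Yv w \<in> B}"
      and "{w. Uv w = u} \<inter> Ypot z -` B = {w. Uv w = u \<and> Ypot z w \<in> B}"
      by auto
    ultimately show "prob ({w. Zv w = z \<and> RDv w \<and> Uv w = u \<and> R w} \<inter> Yv -` B)
        = k * prob ({w. Uv w = u} \<inter> Ypot z -` B)"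
      using law by simp
  qed (use k in \<open>auto intro: events_pred\<close>)
  show "stratum_moment P R (\<lambda>_. 1) z u = k * stratum_prob P u"
    using law[of UNIV] by (simp add: stratum_moment_def stratum_prob_def)
qed

lemma cace_eq_wald_contrast:
  assumes R: "Measurable.pred full_space R"
    and law: "\<And>z u B. B \<in> sets borel \<Longrightarrow>
       prob {w. Zv w = z \<and> RDv w \<and> Uv w = u \<and> R w \<and> Yv w \<in> B}
       = pZ P z * c u (treatment_of u z) * prob {w. Uv w = u \<and> Ypot z w \<in> B}"
    and c_nonneg: "\<And>u d. c u d \<ge> 0" and c_pos: "\<And>d. c Complier d > 0"
  shows "cace P = wald_contrast (cell_moment P R Yv) (cell_moment P R (\<lambda>_. 1)) (pZ P)"
proof -
  have k: "pZ P z * c u (treatment_of u z) \<ge> 0" for z u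
    using pZ_pos[of z] c_nonneg[of u] by simp
  note moments = stratum_moments_if_law[OF R k law]
  have "instrument_contrast (cell_moment P R Yv) (pZ P) d = c Complier d * stratum_outcome P Complier d" for d
    by (rule instrument_contrast_cell_moment[OF R integrable_Y(4) moments(1)])
       (simp_all add: stratum_outcome_exclusion)
  moreover have "instrument_contrast (cell_moment P R (\<lambda>_. 1)) (pZ P) d = c Complier d * stratum_prob P Complier" for d
    by (rule instrument_contrast_cell_moment[OF R _ moments(2)]) simp_all
  ultimately show ?thesis
    using c_pos[of True] c_pos[of False] stratum_prob_complier_pos
    by (simp add: wald_contrast_def cace_eq_stratum_outcome diff_divide_distrib)
qed

lemma cace_eq_wald_contrast_of_cells:
  "cace P = wald_contrast (cell_moment P (\<lambda>_. True) Yv) (cell_moment P (\<lambda>_. True) (\<lambda>_. 1)) (pZ P)"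
  by (rule cace_eq_wald_contrast[where c = "rd_rate P"])
     (simp_all add: prob_resp_D_stratum rd_rate_nonneg rd_rate_complier_pos)

lemma cell_moment_one_eq:
  "cell_moment P (\<lambda>_. True) (\<lambda>_. 1) = (\<lambda>z d. prob {w. Zv w = z \<and> RDv w \<and> Dv w = d})"
  "cell_moment P RYv (\<lambda>_. 1) = (\<lambda>z d. prob {w. Zv w = z \<and> RDv w \<and> Dv w = d \<and> RYv w})"
proof -
  have "{w. Zv w = z \<and> RDv w \<and> Dv w = d} \<in> events" "{w. Zv w = z \<and> RDv w \<and> Dv w = d \<and> RYv w} \<in> events"
    for z d
    by (intro events_pred; measurable)+
  then show "cell_moment P (\<lambda>_. True) (\<lambda>_. 1) = (\<lambda>z d. prob {w. Zv w = z \<and> RDv w \<and> Dv w = d})"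
    "cell_moment P RYv (\<lambda>_. 1) = (\<lambda>z d. prob {w. Zv w = z \<and> RDv w \<and> Dv w = d \<and> RYv w})"
    by (simp_all add: fun_eq_iff cell_moment_def)
qed

lemma instrument_contrast_cell_prob:
  "instrument_contrast (\<lambda>z d. prob {w. Zv w = z \<and> RDv w \<and> Dv w = d}) (pZ P) d
   = rd_rate P Complier d * stratum_prob P Complier"
proof -
  have "stratum_moment P (\<lambda>_. True) (\<lambda>_. 1) z u = pZ P z * rd_rate P u (treatment_of u z) * stratum_prob P u"
    for z u
    using pZ_pos[of z] rd_rate_nonneg[of u]
    by (intro stratum_moments_if_law(2)) (simp_all add: prob_resp_D_stratum)
  from instrument_contrast_cell_moment[OF _ _ this] show ?thesis
    by (simp add: cell_moment_one_eq)
qed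

lemma cell_moments_if_law:
  assumes [measurable]: "Measurable.pred full_space R" and k: "k \<ge> 0"
    and law: "\<And>B. B \<in> sets borel \<Longrightarrow>
       prob {w. Zv w = z \<and> RDv w \<and> Dv w = d \<and> R w \<and> Yv w \<in> B}
       = k * prob {w. Zv w = z \<and> RDv w \<and> Dv w = d \<and> Yv w \<in> B}"
  shows "cell_moment P R Yv z d = k * cell_moment P (\<lambda>_. True) Yv z d"
    and "cell_moment P R (\<lambda>_. 1) z d = k * cell_moment P (\<lambda>_. True) (\<lambda>_. 1) z d"
proof -
  show "cell_moment P R Yv z d = k * cell_moment P (\<lambda>_. True) Yv z d"
    unfolding cell_moment_def
  proof (rule integral_indicator_eq_if_measure_eq)
    fix B :: "real set" assume "B \<in> sets borel"
    moreover have "{w. Zv w = z \<and> RDv w \<and> Dv w = d \<and> R w} \<inter> Yv -` B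
        = {w. Zv w = z \<and> RDv w \<and> Dv w = d \<and> R w \<and> Yv w \<in> B}"
      and "{w. Zv w = z \<and> RDv w \<and> Dv w = d \<and> True} \<inter> Yv -` B
        = {w. Zv w = z \<and> RDv w \<and> Dv w = d \<and> Yv w \<in> B}"
      by auto
    ultimately show "prob ({w. Zv w = z \<and> RDv w \<and> Dv w = d \<and> R w} \<inter> Yv -` B)
        = k * prob ({w. Zv w = z \<and> RDv w \<and> Dv w = d \<and> True} \<inter> Yv -` B)"
      using law by simp
  qed (use k in \<open>auto intro: events_pred\<close>)
  show "cell_moment P R (\<lambda>_. 1) z d = k * cell_moment P (\<lambda>_. True) (\<lambda>_. 1) z d"
    using law[of UNIV] by (simp add: cell_moment_def)
qed

end

section \<open>The law of the observed data\<close>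

type_synonym obs_data = "bool \<times> bool \<times> bool \<times> bool \<times> real"

definition obs_Z :: "obs_data measure \<Rightarrow> bool \<Rightarrow> real" where
  "obs_Z L z = measure L {(z', _). z' = z}"

definition obs_cell :: "obs_data measure \<Rightarrow> bool \<Rightarrow> bool \<Rightarrow> real" where
  "obs_cell L z d = measure L {(z', r, d', _). z' = z \<and> r \<and> d' = d}"

definition obs_resp :: "obs_data measure \<Rightarrow> bool \<Rightarrow> bool \<Rightarrow> real" where
  "obs_resp L z d = measure L {(z', r, d', r', _). z' = z \<and> r \<and> d' = d \<and> r'}"

definition obs_resp_at :: "obs_data measure \<Rightarrow> bool \<Rightarrow> bool \<Rightarrow> real \<Rightarrow> real" where
  "obs_resp_at L z d y = measure L {(z', r, d', r', y'). z' = z \<and> r \<and> d' = d \<and> r' \<and> y' = y}"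

definition obs_resp_sum :: "obs_data measure \<Rightarrow> bool \<Rightarrow> bool \<Rightarrow> real" where
  "obs_resp_sum L z d = (\<integral>(z', r, d', r', y'). (if z' = z \<and> r \<and> d' = d \<and> r' then y' else 0) \<partial>L)"

context iv_model
begin

lemma measurable_obs [measurable]: "obs \<in> measurable P obs_space"
  unfolding obs_def obs_space_def by measurable

lemma measure_obs_law:
  assumes "\<And>w. \<phi> (obs w) \<longleftrightarrow> \<psi> w" and "Measurable.pred obs_space \<phi>"
  shows "measure (obs_law P) {x. \<phi> x} = prob {w. \<psi> w}"
proof -
  have "{x. \<phi> x} \<in> sets obs_space"
    using assms(2) by (simp add: pred_def obs_space_def space_pair_measure)
  then show ?thesis
    unfolding obs_law_def using assms(1) by (simp add: measure_distr vimage_def)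
qed

lemma obs_resp_sum_obs_law: "obs_resp_sum (obs_law P) z d = cell_moment P RYv Yv z d"
proof -
  let ?g = "\<lambda>(z', r, d', r', y'). if z' = z \<and> r \<and> d' = d \<and> r' then y' else (0::real)"
  have "?g \<in> borel_measurable obs_space"
    unfolding obs_space_def split_beta' by measurable
  then have "obs_resp_sum (obs_law P) z d = (\<integral>w. ?g (obs w) \<partial>P)"
    unfolding obs_resp_sum_def obs_law_def by (simp add: integral_distr)
  also have "\<dots> = cell_moment P RYv Yv z d"
    unfolding cell_moment_def by (rule Bochner_Integration.integral_cong) (auto simp: obs_def)
  finally show ?thesis .
qed

lemma obs_law_eqs [simp]:
  "obs_Z (obs_law P) = pZ P"
  "obs_cell (obs_law P) = (\<lambda>z d. prob {w. Zv w = z \<and> RDv w \<and> Dv w = d})"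
  "obs_resp (obs_law P) = (\<lambda>z d. prob {w. Zv w = z \<and> RDv w \<and> Dv w = d \<and> RYv w})"
  "obs_resp_at (obs_law P) = (\<lambda>z d y. prob {w. Zv w = z \<and> RDv w \<and> Dv w = d \<and> RYv w \<and> Yv w = y})"
  "obs_resp_sum (obs_law P) = cell_moment P RYv Yv"
  unfolding fun_eq_iff obs_Z_def pZ_def obs_cell_def obs_resp_def obs_resp_at_def
  by (intro allI measure_obs_law, force simp: obs_def, unfold obs_space_def split_beta', measurable)+
     (simp add: obs_resp_sum_obs_law)

section \<open>Binary outcomes\<close>

lemma binary_split:
  fixes V :: "unit_data \<Rightarrow> real"
  assumes bin: "AE w in P. V w \<in> {0, 1}"
    and [measurable]: "V \<in> borel_measurable full_space" "Measurable.pred full_space \<Phi>"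
  shows "prob {w. \<Phi> w} = prob {w. \<Phi> w \<and> V w = 0} + prob {w. \<Phi> w \<and> V w = 1}"
    and "(\<integral>w. indicator {w. \<Phi> w} w * V w \<partial>P) = prob {w. \<Phi> w \<and> V w = 1}"
proof -
  have "prob {w. \<Phi> w} = prob ({w. \<Phi> w \<and> V w = 0} \<union> {w. \<Phi> w \<and> V w = 1})"
    using bin by (intro measure_eq_AE) (auto intro!: events_pred)
  also have "\<dots> = prob {w. \<Phi> w \<and> V w = 0} + prob {w. \<Phi> w \<and> V w = 1}"
    by (intro finite_measure_Union events_pred) auto
  finally show "prob {w. \<Phi> w} = prob {w. \<Phi> w \<and> V w = 0} + prob {w. \<Phi> w \<and> V w = 1}" .
  have "(\<integral>w. indicator {w. \<Phi> w} w * V w \<partial>P) = (\<integral>w. indicator {w. \<Phi> w \<and> V w = 1} w \<partial>P)"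
    using bin by (intro integral_cong_AE) (auto simp: indicator_def)
  then show "(\<integral>w. indicator {w. \<Phi> w} w * V w \<partial>P) = prob {w. \<Phi> w \<and> V w = 1}"
    by simp
qed

lemma binary_Ypot:
  assumes bin: "binary_Y P"
  shows "AE w in P. Ypot z w \<in> {0, 1}"
proof -
  have Y: "{w. Yv w \<notin> {0, 1}} \<in> events"
    by (intro events_pred) measurable
  have Yz: "{w. Ypot z w \<notin> {0, 1}} \<in> events"
    by (intro events_pred) measurable
  have "AE w in P. w \<notin> {w. Yv w \<notin> {0, 1}}"
    using bin by (simp add: binary_Y_def)
  then have "prob {w. Yv w \<notin> {0, 1}} = 0"
    by (simp add: AE_iff_measurable[OF Y] emeasure_eq_measure)
  moreover have "prob {w. Zv w = z \<and> Uv w \<in> UNIV \<and> Ypot z w \<in> - {0, 1}} \<le> prob {w. Yv w \<notin> {0, 1}}"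
    by (rule finite_measure_mono[OF _ Y]) (auto simp: Yv_eq_Ypot)
  ultimately have "pZ P z * prob {w. Ypot z w \<notin> {0, 1}} \<le> 0"
    using prob_Z_stratum[of "- {0, 1}" z UNIV] by simp
  then have "prob {w. Ypot z w \<notin> {0, 1}} \<le> 0"
    using pZ_pos[of z] by (simp add: mult_le_0_iff)
  then have "prob {w. Ypot z w \<notin> {0, 1}} = 0"
    by (rule antisym[OF _ measure_nonneg])
  then show ?thesis
    by (simp add: AE_iff_measurable[OF Yz] emeasure_eq_measure)
qed

lemma cell_outcome_binary:
  "binary_Y P \<Longrightarrow> cell_moment P (\<lambda>_. True) Yv z d = prob {w. Zv w = z \<and> RDv w \<and> Dv w = d \<and> Yv w = 1}"
  using binary_split(2)[of Yv "\<lambda>w. Zv w = z \<and> RDv w \<and> Dv w = d"]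
  by (simp add: cell_moment_def binary_Y_def)

lemma prob_binary_table:
  assumes bin: "binary_Y P"
    and [measurable]: "Measurable.pred full_space X" "Measurable.pred full_space E" "A \<in> sets borel"
  defines "n x y \<equiv> prob {w. X w = x \<and> E w \<and> Yv w = y}"
  shows "prob {w. Yv w \<in> A \<and> X w \<in> B \<and> E w}
       = of_bool (0 \<in> A \<and> True \<in> B) * n True 0 + of_bool (1 \<in> A \<and> True \<in> B) * n True 1
       + of_bool (0 \<in> A \<and> False \<in> B) * n False 0 + of_bool (1 \<in> A \<and> False \<in> B) * n False 1"
proof -
  let ?I = "\<lambda>x y. indicator {w. X w = x \<and> E w \<and> Yv w = y} :: unit_data \<Rightarrow> real"
  have "AE w in P. indicator {w. Yv w \<in> A \<and> X w \<in> B \<and> E w} w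
      = of_bool (0 \<in> A \<and> True \<in> B) * ?I True 0 w + of_bool (1 \<in> A \<and> True \<in> B) * ?I True 1 w
      + of_bool (0 \<in> A \<and> False \<in> B) * ?I False 0 w + of_bool (1 \<in> A \<and> False \<in> B) * ?I False 1 w"
    using bin unfolding binary_Y_def by eventually_elim (auto simp: indicator_def)
  then have "(\<integral>w. indicator {w. Yv w \<in> A \<and> X w \<in> B \<and> E w} w \<partial>P)
      = (\<integral>w. of_bool (0 \<in> A \<and> True \<in> B) * ?I True 0 w + of_bool (1 \<in> A \<and> True \<in> B) * ?I True 1 w
      + of_bool (0 \<in> A \<and> False \<in> B) * ?I False 0 w + of_bool (1 \<in> A \<and> False \<in> B) * ?I False 1 w \<partial>P)"
    by (rule integral_cong_AE[rotated 2]; measurable)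
  moreover have cells: "{w. X w = x \<and> E w \<and> Yv w = y} \<in> events" for x y
    by (intro events_pred) measurable
  moreover have "{w. Yv w \<in> A \<and> X w \<in> B \<and> E w} \<in> events"
    by (intro events_pred) measurable
  moreover have int: "integrable P (?I x y)" for x y
    using cells by (simp add: integrable_real_indicator less_top[symmetric])
  ultimately show ?thesis
    unfolding n_def using int[of True 0] int[of True 1] int[of False 0] int[of False 1] by simp
qed

lemma indep_given_if_binary_det_zero:
  assumes bin: "binary_Y P" and [measurable]: "Measurable.pred full_space X" "Measurable.pred full_space E"
  defines "n x y \<equiv> prob {w. X w = x \<and> E w \<and> Yv w = y}"
  assumes det: "n False 0 * n True 1 = n False 1 * n True 0"
  shows "indep_given P Yv borel X (count_space UNIV) E"
  unfolding indep_given_def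
proof (intro ballI)
  fix A :: "real set" and B :: "bool set" assume [measurable]: "A \<in> sets borel"
  define a :: real where "a = of_bool (0 \<in> A)"
  define c :: real where "c = of_bool (1 \<in> A)"
  define e :: real where "e = of_bool (True \<in> B)"
  define f :: real where "f = of_bool (False \<in> B)"
  note table = prob_binary_table[OF bin, of X E, folded n_def, simplified]
  have "prob {w. Yv w \<in> A \<and> X w \<in> B \<and> E w} * prob {w. E w}
      - prob {w. Yv w \<in> A \<and> E w} * prob {w. X w \<in> B \<and> E w}
      = (a * e * n True 0 + c * e * n True 1 + a * f * n False 0 + c * f * n False 1)
          * (n True 0 + n True 1 + n False 0 + n False 1)
        - (a * n True 0 + c * n True 1 + a * n False 0 + c * n False 1)
          * (e * n True 0 + e * n True 1 + f * n False 0 + f * n False 1)"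
    using table[of A B] table[of A UNIV] table[of UNIV B] table[of UNIV UNIV]
    by (simp add: a_def c_def e_def f_def)
  also have "\<dots> = (e - f) * (a - c) * (n True 0 * n False 1 - n True 1 * n False 0)"
    by (simp add: algebra_simps)
  also have "\<dots> = 0"
    using det by (simp add: algebra_simps)
  finally show "prob {w \<in> space P. Yv w \<in> A \<and> X w \<in> B \<and> E w} * prob {w \<in> space P. E w}
      = prob {w \<in> space P. Yv w \<in> A \<and> E w} * prob {w \<in> space P. X w \<in> B \<and> E w}"
    by simp
qed

lemma prob_outcome_eq_shadow_mass:
  assumes bin: "binary_Y P" and X [measurable]: "Measurable.pred full_space X"
    and E [measurable]: "Measurable.pred full_space E"
    and resp: "\<And>x y. prob {w. X w = x \<and> E w \<and> RYv w \<and> Yv w = y} = \<beta> y * prob {w. X w = x \<and> E w \<and> Yv w = y}"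
    and \<beta>: "\<beta> 0 > 0" "\<beta> 1 > 0"
    and dep: "\<not> indep_given P Yv borel X (count_space UNIV) E"
  shows "prob {w. X w = x \<and> E w \<and> Yv w = 1}
       = shadow_mass (\<lambda>x y. prob {w. X w = x \<and> E w \<and> RYv w \<and> Yv w = y}) (\<lambda>x. prob {w. X w = x \<and> E w}) x"
proof (rule shadow_mass_eq[OF resp _ \<beta>, symmetric])
  have "prob {w. X w = x \<and> E w}
      = prob {w. (X w = x \<and> E w) \<and> Yv w = 0} + prob {w. (X w = x \<and> E w) \<and> Yv w = 1}" for x
    using bin unfolding binary_Y_def by (rule binary_split(1); measurable)
  then show "prob {w. X w = x \<and> E w}
      = prob {w. X w = x \<and> E w \<and> Yv w = 0} + prob {w. X w = x \<and> E w \<and> Yv w = 1}" for x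
    by (simp add: conj_assoc)
  show "prob {w. X w = False \<and> E w \<and> Yv w = 0} * prob {w. X w = True \<and> E w \<and> Yv w = 1}
      \<noteq> prob {w. X w = False \<and> E w \<and> Yv w = 1} * prob {w. X w = True \<and> E w \<and> Yv w = 0}"
    using indep_given_if_binary_det_zero[OF bin X E] dep by blast
qed

lemma instrument_contrast_resp_at:
  assumes ci: "cond_indep P RYv (count_space UNIV) (\<lambda>w. (Zv w, Dv w)) (count_space UNIV) (\<lambda>w. (Uv w, Yv w, RDv w))"
  shows "instrument_contrast (\<lambda>z d. prob {w. Zv w = z \<and> RDv w \<and> Dv w = d \<and> RYv w \<and> Yv w = y}) (pZ P) d
       = cprob P RYv (\<lambda>w. Uv w = Complier \<and> Yv w = y \<and> RDv w) * rd_rate P Complier d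
         * prob {w. Uv w = Complier \<and> Ypot d w = y}"
proof -
  let ?\<beta> = "\<lambda>u. cprob P RYv (\<lambda>w. Uv w = u \<and> Yv w = y \<and> RDv w)"
  let ?R = "\<lambda>w. RYv w \<and> Yv w = y"
  have [measurable]: "Measurable.pred full_space ?R"
    by measurable
  have "stratum_moment P ?R (\<lambda>_. 1) z u
      = pZ P z * (?\<beta> u * rd_rate P u (treatment_of u z)) * prob {w. Uv w = u \<and> Ypot z w = y}" for z u
  proof -
    let ?t = "treatment_of u z"
    have "{w. (Uv w, Yv w, RDv w) = (u, y, True)} \<in> events"
      by (intro events_pred) (simp only: prod.inject, measurable)
    from cond_indep_response_factor[OF ci _ this, of "{(z, ?t)}"]
    have "prob {w. RYv w \<and> Zv w = z \<and> Dv w = ?t \<and> Uv w = u \<and> Yv w = y \<and> RDv w}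
        = ?\<beta> u * prob {w. Zv w = z \<and> Dv w = ?t \<and> Uv w = u \<and> Yv w = y \<and> RDv w}"
      by simp
    moreover have "{w. RYv w \<and> Zv w = z \<and> Dv w = ?t \<and> Uv w = u \<and> Yv w = y \<and> RDv w}
        = {w. Zv w = z \<and> RDv w \<and> Uv w = u \<and> ?R w}"
      and "{w. Zv w = z \<and> Dv w = ?t \<and> Uv w = u \<and> Yv w = y \<and> RDv w}
        = {w. Zv w = z \<and> RDv w \<and> Uv w = u \<and> Yv w \<in> {y}}"
      by (auto simp: Dv_eq_treatment_of)
    moreover have "{w. Zv w = z \<and> RDv w \<and> Uv w = u \<and> ?R w} \<in> events"
      by (intro events_pred) measurable
    ultimately show ?thesis
      using prob_resp_D_stratum[of "{y}" z u] by (simp add: stratum_moment_def)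
  qed
  from instrument_contrast_cell_moment[OF _ _ this] have
    "instrument_contrast (cell_moment P ?R (\<lambda>_. 1)) (pZ P) d
     = ?\<beta> Complier * rd_rate P Complier d * prob {w. Uv w = Complier \<and> Ypot d w = y}"
    using prob_potential_exclusion[of Always y] prob_potential_exclusion[of Never y] by simp
  moreover have "cell_moment P ?R (\<lambda>_. 1) = (\<lambda>z d. prob {w. Zv w = z \<and> RDv w \<and> Dv w = d \<and> ?R w})"
    by (intro ext) (simp add: cell_moment_def events_pred)
  ultimately show ?thesis
    by simp
qed

end

section \<open>Identification of the CACE\<close>

text \<open>The suffix names the variables besides \<open>R\<^sup>D\<close> on which the response \<open>R\<^sup>Y\<close> may depend
  (scenarios 1ZD, 1UD, 1DY, 1ZY, 1UY of the paper).\<close>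

definition cace_formula_ZD :: "obs_data measure \<Rightarrow> real" where
  "cace_formula_ZD L =
     wald_contrast (\<lambda>z d. obs_resp_sum L z d * obs_cell L z d / obs_resp L z d) (obs_cell L) (obs_Z L)"

definition cace_formula_UD :: "obs_data measure \<Rightarrow> real" where
  "cace_formula_UD L = wald_contrast (obs_resp_sum L) (obs_resp L) (obs_Z L)"

definition cace_formula_DY :: "obs_data measure \<Rightarrow> real" where
  "cace_formula_DY L =
     wald_contrast (\<lambda>z d. shadow_mass (\<lambda>z' y. obs_resp_at L z' d y) (\<lambda>z'. obs_cell L z' d) z)
       (obs_cell L) (obs_Z L)"

definition cace_formula_ZY :: "obs_data measure \<Rightarrow> real" where
  "cace_formula_ZY L = wald_contrast (\<lambda>z d. shadow_mass (obs_resp_at L z) (obs_cell L z) d) (obs_cell L) (obs_Z L)"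

definition cace_formula_UY :: "obs_data measure \<Rightarrow> real" where
  "cace_formula_UY L =
     (let r = \<lambda>d y. instrument_contrast (\<lambda>z d'. obs_resp_at L z d' y) (obs_Z L) d
                   / instrument_contrast (obs_cell L) (obs_Z L) d
      in binary_contrast (r True 0) (r True 1) (r False 0) (r False 1))"

context iv_model
begin

lemma cace_ZD:
  assumes ci: "cond_indep P RYv (count_space UNIV) (\<lambda>w. (Uv w, Yv w)) (count_space UNIV \<Otimes>\<^sub>M borel)
      (\<lambda>w. (Zv w, Dv w, RDv w))"
    and pos: "\<forall>z d. cprob P RYv (\<lambda>w. Zv w = z \<and> Dv w = d \<and> RDv w) > 0"
  shows "cace P = cace_formula_ZD (obs_law P)"
proof -
  have "cell_moment P (\<lambda>_. True) Yv z d
      = cell_moment P RYv Yv z d * cell_moment P (\<lambda>_. True) (\<lambda>_. 1) z d / cell_moment P RYv (\<lambda>_. 1) z d"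
    for z d
  proof -
    let ?\<beta> = "cprob P RYv (\<lambda>w. Zv w = z \<and> Dv w = d \<and> RDv w)"
    have ev: "{w. (Zv w, Dv w, RDv w) = (z, d, True)} \<in> events"
      by (intro events_pred) (simp only: prod.inject, measurable)
    have "prob {w. Zv w = z \<and> RDv w \<and> Dv w = d \<and> RYv w \<and> Yv w \<in> B}
        = ?\<beta> * prob {w. Zv w = z \<and> RDv w \<and> Dv w = d \<and> Yv w \<in> B}" if "B \<in> sets borel" for B
      using cond_indep_response_factor[OF ci _ ev, of "UNIV \<times> B"] that by (simp add: conj_ac)
    note moments = cell_moments_if_law[OF pred_unit_data(3) cprob_nonneg this]
    have "0 < prob {w. Zv w = z \<and> Dv w = d \<and> RDv w}"
      using measure_pos_if_cprob_pos pos by fastforce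
    then have "cell_moment P (\<lambda>_. True) (\<lambda>_. 1) z d > 0"
      by (simp add: cell_moment_one_eq conj_ac)
    then show ?thesis
      using pos[rule_format, of z d] by (simp add: moments)
  qed
  then have "cell_moment P (\<lambda>_. True) Yv
      = (\<lambda>z d. cell_moment P RYv Yv z d * cell_moment P (\<lambda>_. True) (\<lambda>_. 1) z d / cell_moment P RYv (\<lambda>_. 1) z d)"
    by (intro ext)
  then show ?thesis
    by (simp add: cace_formula_ZD_def cace_eq_wald_contrast_of_cells cell_moment_one_eq)
qed

lemma cace_UD:
  assumes ci: "cond_indep P RYv (count_space UNIV) (\<lambda>w. (Zv w, Yv w)) (count_space UNIV \<Otimes>\<^sub>M borel)
      (\<lambda>w. (Uv w, Dv w, RDv w))"
    and pos: "\<forall>d. cprob P RYv (\<lambda>w. Uv w = Complier \<and> Dv w = d \<and> RDv w) > 0"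
  shows "cace P = cace_formula_UD (obs_law P)"
proof -
  let ?\<beta> = "\<lambda>u d. cprob P RYv (\<lambda>w. Uv w = u \<and> Dv w = d \<and> RDv w)"
  have "prob {w. Zv w = z \<and> RDv w \<and> Uv w = u \<and> RYv w \<and> Yv w \<in> B}
      = pZ P z * (?\<beta> u (treatment_of u z) * rd_rate P u (treatment_of u z)) * prob {w. Uv w = u \<and> Ypot z w \<in> B}"
    if B: "B \<in> sets borel" for z u B
  proof -
    let ?t = "treatment_of u z"
    have "{w. (Uv w, Dv w, RDv w) = (u, ?t, True)} \<in> events"
      by (intro events_pred) (simp only: prod.inject, measurable)
    from cond_indep_response_factor[OF ci _ this, of "{z} \<times> B"] B
    have "prob {w. RYv w \<and> Zv w = z \<and> Yv w \<in> B \<and> Uv w = u \<and> Dv w = ?t \<and> RDv w}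
        = ?\<beta> u ?t * prob {w. Zv w = z \<and> Yv w \<in> B \<and> Uv w = u \<and> Dv w = ?t \<and> RDv w}"
      by simp
    moreover have "{w. RYv w \<and> Zv w = z \<and> Yv w \<in> B \<and> Uv w = u \<and> Dv w = ?t \<and> RDv w}
        = {w. Zv w = z \<and> RDv w \<and> Uv w = u \<and> RYv w \<and> Yv w \<in> B}"
      and "{w. Zv w = z \<and> Yv w \<in> B \<and> Uv w = u \<and> Dv w = ?t \<and> RDv w}
        = {w. Zv w = z \<and> RDv w \<and> Uv w = u \<and> Yv w \<in> B}"
      by (auto simp: Dv_eq_treatment_of)
    ultimately show ?thesis
      using prob_resp_D_stratum[OF B] by simp
  qed
  then show ?thesis
    unfolding cace_formula_UD_def obs_law_eqs cell_moment_one_eq[symmetric]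
    by (rule cace_eq_wald_contrast[OF pred_unit_data(3)])
       (use pos rd_rate_complier_pos in \<open>auto intro: mult_nonneg_nonneg cprob_nonneg rd_rate_nonneg\<close>)
qed

lemma cace_DY:
  assumes bin: "binary_Y P"
    and ci: "cond_indep P RYv (count_space UNIV) (\<lambda>w. (Zv w, Uv w)) (count_space UNIV) (\<lambda>w. (Dv w, Yv w, RDv w))"
    and pos: "\<forall>d. \<forall>y \<in> {0, 1}. cprob P RYv (\<lambda>w. Dv w = d \<and> Yv w = y \<and> RDv w) > 0"
    and dep: "\<forall>d. \<not> indep_given P Yv borel Zv (count_space UNIV) (\<lambda>w. Dv w = d \<and> RDv w)"
  shows "cace P = cace_formula_DY (obs_law P)"
proof -
  have "cell_moment P (\<lambda>_. True) Yv z d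
      = shadow_mass (\<lambda>z' y. prob {w. Zv w = z' \<and> RDv w \<and> Dv w = d \<and> RYv w \<and> Yv w = y})
          (\<lambda>z'. prob {w. Zv w = z' \<and> RDv w \<and> Dv w = d}) z" for z d
  proof -
    let ?E = "\<lambda>w. Dv w = d \<and> RDv w"
    have E: "Measurable.pred full_space ?E"
      by measurable
    have resp: "prob {w. Zv w = x \<and> ?E w \<and> RYv w \<and> Yv w = y}
        = cprob P RYv (\<lambda>w. Dv w = d \<and> Yv w = y \<and> RDv w) * prob {w. Zv w = x \<and> ?E w \<and> Yv w = y}" for x y
    proof -
      have "{w. (Dv w, Yv w, RDv w) = (d, y, True)} \<in> events"
        by (intro events_pred) (simp only: prod.inject, measurable)
      from cond_indep_response_factor[OF ci _ this, of "{x} \<times> UNIV"] show ?thesis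
        by (simp add: conj_ac)
    qed
    have "cell_moment P (\<lambda>_. True) Yv z d = prob {w. Zv w = z \<and> ?E w \<and> Yv w = 1}"
      using cell_outcome_binary[OF bin] by (simp add: conj_ac)
    also have "\<dots> = shadow_mass (\<lambda>x y. prob {w. Zv w = x \<and> ?E w \<and> RYv w \<and> Yv w = y})
        (\<lambda>x. prob {w. Zv w = x \<and> ?E w}) z"
      by (rule prob_outcome_eq_shadow_mass[OF bin pred_unit_data(1) E resp]) (use pos dep in auto)
    finally show ?thesis
      by (simp add: conj_ac)
  qed
  then have "cell_moment P (\<lambda>_. True) Yv
      = (\<lambda>z d. shadow_mass (\<lambda>z' y. prob {w. Zv w = z' \<and> RDv w \<and> Dv w = d \<and> RYv w \<and> Yv w = y})
          (\<lambda>z'. prob {w. Zv w = z' \<and> RDv w \<and> Dv w = d}) z)"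
    by (intro ext)
  then show ?thesis
    by (simp add: cace_formula_DY_def cace_eq_wald_contrast_of_cells cell_moment_one_eq)
qed

lemma cace_ZY:
  assumes bin: "binary_Y P"
    and ci: "cond_indep P RYv (count_space UNIV) (\<lambda>w. (Uv w, Dv w)) (count_space UNIV) (\<lambda>w. (Zv w, Yv w, RDv w))"
    and pos: "\<forall>z. \<forall>y \<in> {0, 1}. cprob P RYv (\<lambda>w. Zv w = z \<and> Yv w = y \<and> RDv w) > 0"
    and dep: "\<forall>z. \<not> indep_given P Yv borel Dv (count_space UNIV) (\<lambda>w. Zv w = z \<and> RDv w)"
  shows "cace P = cace_formula_ZY (obs_law P)"
proof -
  have "cell_moment P (\<lambda>_. True) Yv z d
      = shadow_mass (\<lambda>d' y. prob {w. Zv w = z \<and> RDv w \<and> Dv w = d' \<and> RYv w \<and> Yv w = y})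
          (\<lambda>d'. prob {w. Zv w = z \<and> RDv w \<and> Dv w = d'}) d" for z d
  proof -
    let ?E = "\<lambda>w. Zv w = z \<and> RDv w"
    have E: "Measurable.pred full_space ?E"
      by measurable
    have resp: "prob {w. Dv w = x \<and> ?E w \<and> RYv w \<and> Yv w = y}
        = cprob P RYv (\<lambda>w. Zv w = z \<and> Yv w = y \<and> RDv w) * prob {w. Dv w = x \<and> ?E w \<and> Yv w = y}" for x y
    proof -
      have "{w. (Zv w, Yv w, RDv w) = (z, y, True)} \<in> events"
        by (intro events_pred) (simp only: prod.inject, measurable)
      from cond_indep_response_factor[OF ci _ this, of "UNIV \<times> {x}"] show ?thesis
        by (simp add: conj_ac)
    qed
    have "cell_moment P (\<lambda>_. True) Yv z d = prob {w. Dv w = d \<and> ?E w \<and> Yv w = 1}"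
      using cell_outcome_binary[OF bin] by (simp add: conj_ac)
    also have "\<dots> = shadow_mass (\<lambda>x y. prob {w. Dv w = x \<and> ?E w \<and> RYv w \<and> Yv w = y})
        (\<lambda>x. prob {w. Dv w = x \<and> ?E w}) d"
      by (rule prob_outcome_eq_shadow_mass[OF bin pred_unit_data(4) E resp]) (use pos dep in auto)
    finally show ?thesis
      by (simp add: conj_ac)
  qed
  then have "cell_moment P (\<lambda>_. True) Yv
      = (\<lambda>z d. shadow_mass (\<lambda>d' y. prob {w. Zv w = z \<and> RDv w \<and> Dv w = d' \<and> RYv w \<and> Yv w = y})
          (\<lambda>d'. prob {w. Zv w = z \<and> RDv w \<and> Dv w = d'}) d)"
    by (intro ext)
  then show ?thesis
    by (simp add: cace_formula_ZY_def cace_eq_wald_contrast_of_cells cell_moment_one_eq)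
qed

lemma cace_UY:
  assumes bin: "binary_Y P"
    and ci: "cond_indep P RYv (count_space UNIV) (\<lambda>w. (Zv w, Dv w)) (count_space UNIV) (\<lambda>w. (Uv w, Yv w, RDv w))"
    and pos: "\<forall>y \<in> {0, 1}. cprob P RYv (\<lambda>w. Uv w = Complier \<and> Yv w = y \<and> RDv w) > 0"
  shows "cace P = cace_formula_UY (obs_law P)"
proof -
  let ?\<beta> = "\<lambda>y. cprob P RYv (\<lambda>w. Uv w = Complier \<and> Yv w = y \<and> RDv w)"
  let ?\<pi> = "stratum_prob P Complier"
  define p where "p d = prob {w. Uv w = Complier \<and> Ypot d w = 1} / ?\<pi>" for d
  have \<pi>: "?\<pi> > 0"
    by (rule stratum_prob_complier_pos)
  have split: "?\<pi> = prob {w. Uv w = Complier \<and> Ypot d w = 0} + prob {w. Uv w = Complier \<and> Ypot d w = 1}"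
    and outcome: "stratum_outcome P Complier d = prob {w. Uv w = Complier \<and> Ypot d w = 1}" for d
    unfolding stratum_prob_def stratum_outcome_def
    by (rule binary_split[OF binary_Ypot[OF bin]]; measurable)+
  have mass: "prob {w. Uv w = Complier \<and> Ypot d w = 1} = ?\<pi> * p d"
    "prob {w. Uv w = Complier \<and> Ypot d w = 0} = ?\<pi> * (1 - p d)" for d
    using \<pi> split[of d] by (simp_all add: p_def right_diff_distrib)
  have "instrument_contrast (\<lambda>z d'. prob {w. Zv w = z \<and> RDv w \<and> Dv w = d' \<and> RYv w \<and> Yv w = y}) (pZ P) d
      / instrument_contrast (\<lambda>z d. prob {w. Zv w = z \<and> RDv w \<and> Dv w = d}) (pZ P) d
      = ?\<beta> y * prob {w. Uv w = Complier \<and> Ypot d w = y} / ?\<pi>" for d y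
    using rd_rate_complier_pos[of d]
    by (simp add: instrument_contrast_resp_at[OF ci] instrument_contrast_cell_prob)
  then have "cace_formula_UY (obs_law P)
      = binary_contrast (?\<beta> 0 * (1 - p True)) (?\<beta> 1 * p True) (?\<beta> 0 * (1 - p False)) (?\<beta> 1 * p False)"
    using \<pi> mass[of True] mass[of False] by (simp add: cace_formula_UY_def)
  also have "\<dots> = p True - p False"
    using pos by (intro binary_contrast_eq) auto
  also have "\<dots> = cace P"
    by (simp add: cace_eq_stratum_outcome outcome p_def diff_divide_distrib)
  finally show ?thesis ..
qed

end

lemma cace_identifiable_if_formula:
  assumes "\<And>P. Q P \<Longrightarrow> cace P = \<Phi> (obs_law P)"
  shows "cace_identifiable Q"
  using assms unfolding cace_identifiable_def by metis

theorem theorem3: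
  shows
  "cace_identifiable (\<lambda>P. base_model P \<and>
      cond_indep P RYv (count_space UNIV) (\<lambda>w. (Uv w, Yv w)) (count_space UNIV \<Otimes>\<^sub>M borel)
        (\<lambda>w. (Zv w, Dv w, RDv w)) \<and>
      (\<forall>z d. cprob P RYv (\<lambda>w. Zv w = z \<and> Dv w = d \<and> RDv w) > 0)) \<and>
  cace_identifiable (\<lambda>P. base_model P \<and>
      cond_indep P RYv (count_space UNIV) (\<lambda>w. (Zv w, Yv w)) (count_space UNIV \<Otimes>\<^sub>M borel)
        (\<lambda>w. (Uv w, Dv w, RDv w)) \<and>
      (\<forall>d. cprob P RYv (\<lambda>w. Uv w = Complier \<and> Dv w = d \<and> RDv w) > 0)) \<and>
  cace_identifiable (\<lambda>P. base_model P \<and> binary_Y P \<and> two_sided P \<and>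
      cond_indep P RYv (count_space UNIV) (\<lambda>w. (Zv w, Uv w)) (count_space UNIV)
        (\<lambda>w. (Dv w, Yv w, RDv w)) \<and>
      (\<forall>d. \<forall>y \<in> {0, 1}. cprob P RYv (\<lambda>w. Dv w = d \<and> Yv w = y \<and> RDv w) > 0) \<and>
      (\<forall>d. \<not> indep_given P Yv borel Zv (count_space UNIV) (\<lambda>w. Dv w = d \<and> RDv w))) \<and>
  cace_identifiable (\<lambda>P. base_model P \<and> binary_Y P \<and> two_sided P \<and>
      cond_indep P RYv (count_space UNIV) (\<lambda>w. (Uv w, Dv w)) (count_space UNIV)
        (\<lambda>w. (Zv w, Yv w, RDv w)) \<and>
      (\<forall>z. \<forall>y \<in> {0, 1}. cprob P RYv (\<lambda>w. Zv w = z \<and> Yv w = y \<and> RDv w) > 0) \<and>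
      (\<forall>z. \<not> indep_given P Yv borel Dv (count_space UNIV) (\<lambda>w. Zv w = z \<and> RDv w))) \<and>
  cace_identifiable (\<lambda>P. base_model P \<and> binary_Y P \<and>
      cond_indep P RYv (count_space UNIV) (\<lambda>w. (Zv w, Dv w)) (count_space UNIV)
        (\<lambda>w. (Uv w, Yv w, RDv w)) \<and>
      (\<forall>y \<in> {0, 1}. cprob P RYv (\<lambda>w. Uv w = Complier \<and> Yv w = y \<and> RDv w) > 0))"
  by (intro conjI cace_identifiable_if_formula; elim conjE;
      rule iv_model.cace_ZD iv_model.cace_UD iv_model.cace_DY iv_model.cace_ZY iv_model.cace_UY;
      (rule iv_model.intro)?; assumption)

end
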